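(* For every integer $d\ge5$ there exists a graded Artinian level algebra $A=k[x_1,x_2,x_3]/I$ with $\dim_k A_1=3$ whose Hilbert function $(h_0,h_1,\dots)$ satisfies $h_{d-1}>h_d=h_{d+1}=2d+4$.
   Context: $k$ is an infinite field of characteristic $0$; $h_i=\dim_kA_i$. A graded Artinian algebra is level if its socle $\{a:a\mathfrak m=0\}$ ($\mathfrak m$ the maximal homogeneous ideal) is concentrated in a single degree. *)

theory Defs
  imports Main "HOL.Vector_Spaces" "HOL-Library.Poly_Mapping" "HOL-Library.Product_Plus"
begin

text \<open>The polynomial ring k[x1,x2,x3]: finitely supported functions from
exponent vectors (a,b,c) (monomial x1^a x2^b x3^c) to coefficients.\<close>

type_synonym mon3 = "nat \<times> nat \<times> nat"
type_synonym 'k poly3 = "mon3 \<Rightarrow>\<^sub>0 'k"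

definition mdeg :: "mon3 \<Rightarrow> nat" where
  "mdeg m = fst m + fst (snd m) + snd (snd m)"

definition var3 :: "nat \<Rightarrow> 'k::{zero,one} poly3" where
  "var3 j = Poly_Mapping.single
      (if j = 0 then (1,0,0) else if j = 1 then (0,1,0) else (0,0,1)) 1"

definition smult3 :: "'k::field \<Rightarrow> 'k poly3 \<Rightarrow> 'k poly3" where
  "smult3 c p = Poly_Mapping.map (\<lambda>a. c * a) p"

definition homog_part :: "nat \<Rightarrow> 'k::field poly3 set" where
  "homog_part i = {p. \<forall>m \<in> Poly_Mapping.keys p. mdeg m = i}"

definition hcomp :: "nat \<Rightarrow> 'k::field poly3 \<Rightarrow> 'k poly3" where
  "hcomp i p = Poly_Mapping.mapp (\<lambda>m a. if mdeg m = i then a else 0) p"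

definition is_ideal3 :: "'k::field poly3 set \<Rightarrow> bool" where
  "is_ideal3 I \<longleftrightarrow> 0 \<in> I \<and> (\<forall>f\<in>I. \<forall>g\<in>I. f + g \<in> I) \<and> (\<forall>f\<in>I. \<forall>r. r * f \<in> I)"

definition homogeneous_ideal3 :: "'k::field poly3 set \<Rightarrow> bool" where
  "homogeneous_ideal3 I \<longleftrightarrow> is_ideal3 I \<and> (\<forall>f\<in>I. \<forall>i. hcomp i f \<in> I)"

definition hilb3 :: "'k::field poly3 set \<Rightarrow> nat \<Rightarrow> nat" where
  "hilb3 I i = vector_space.dim smult3 (homog_part i :: 'k poly3 set)
               - vector_space.dim smult3 (I \<inter> homog_part i)"

definition artinian3 :: "'k::field poly3 set \<Rightarrow> bool" where
  "artinian3 I \<longleftrightarrow> (\<exists>N. \<forall>i\<ge>N. hilb3 I i = 0)"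

text \<open>Level: the socle is concentrated in a single degree s, i.e. every socle element
  is (modulo I) homogeneous of degree s.\<close>
definition in_socle3 :: "'k::field poly3 set \<Rightarrow> 'k poly3 \<Rightarrow> bool" where
  "in_socle3 I f \<longleftrightarrow> (\<forall>j<3. f * var3 j \<in> I)"

definition level3 :: "'k::field poly3 set \<Rightarrow> bool" where
  "level3 I \<longleftrightarrow> (\<exists>s. \<forall>f. in_socle3 I f \<longrightarrow> (\<exists>g \<in> homog_part s. f - g \<in> I))"

end

theory Submission
  imports Defs
begin

text \<open>Let \<open>A\<close> be the quotient by the ideal that Macaulay duality attaches to the following forms
  of degree \<open>d + 1\<close> of the divided-power ring: the \<open>2d + 3\<close> monomials \<open>X\<^sup>aY\<^sup>bZ\<^sup>c\<close> with
  \<open>c \<le> 1\<close>, and \<open>F = Z\<^sup>d\<^sup>+\<^sup>1 + Y\<^sup>d\<^sup>-\<^sup>1Z\<^sup>2 + X\<^sup>d\<^sup>-\<^sup>3YZ\<^sup>3\<close>. As all of them have degree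
  \<open>d + 1\<close>, \<open>A\<close> is level of socle degree \<open>d + 1\<close> with \<open>h\<^sub>d\<^sub>+\<^sub>1 = 2d + 4\<close>. In a degree
  \<open>n \<le> d + 1\<close> the ideal is cut out by the vanishing of the \<open>2n + 1\<close> coefficients of the
  monomials with \<open>c \<le> 1\<close> together with the contractions of \<open>F\<close>; modulo the former, the
  latter are coefficient sums over pairwise disjoint groups of monomials, and such conditions
  are independent. There are three such groups in degree \<open>d\<close>, whereas in degree \<open>d - 1\<close>
  the six second-order contractions of \<open>F\<close> reduce, modulo the monomials with \<open>c \<le> 1\<close>, to six
  distinct single monomials. Hence \<open>h\<^sub>d = 2d + 4 < 2d + 5 = h\<^sub>d\<^sub>-\<^sub>1\<close>.\<close>

lemma (in vector_space) dim_insert_not_in_span: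
  assumes x: "x \<notin> span W" and T: "finite T" "W \<subseteq> span T"
  shows "dim (insert x W) = dim W + 1"
proof -
  obtain B where B: "B \<subseteq> W" "independent B" "W \<subseteq> span B" "card B = dim W"
    using basis_exists[of W] by blast
  have "finite B"
    using independent_span_bound[OF T(1) B(2)] B(1) T(2) by (meson order_trans)
  have "span B \<subseteq> span W"
    using B(1) by (rule span_mono)
  then have xB: "x \<notin> span B"
    using x by blast
  have "card (insert x B) = dim (insert x W)"
  proof (rule basis_card_eq_dim)
    show "insert x B \<subseteq> insert x W"
      using B(1) by blast
    have "span B \<subseteq> span (insert x B)"
      by (rule span_mono) blast
    then show "insert x W \<subseteq> span (insert x B)"
      using B(3) span_base[of x "insert x B"] by blast
    show "independent (insert x B)"
      using xB B(2) by (rule independent_insertI)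
  qed
  moreover have "x \<notin> B"
    using xB span_base by blast
  ultimately show ?thesis
    using \<open>finite B\<close> B(4) by simp
qed

lemma (in vector_space) dim_codimension_one:
  assumes W: "subspace W" "W \<subseteq> V" and x: "x \<in> V" "x \<notin> W"
    and split: "\<And>v. v \<in> V \<Longrightarrow> \<exists>c. v - scale c x \<in> W"
    and T: "finite T" "V \<subseteq> span T"
  shows "dim V = dim W + 1"
proof -
  have "V \<subseteq> span (insert x W)"
  proof
    fix v assume "v \<in> V"
    then obtain c where c: "v - scale c x \<in> W" using split by blast
    have "(v - scale c x) + scale c x \<in> span (insert x W)"
      using c by (intro span_add span_scale span_base) auto
    then show "v \<in> span (insert x W)" by simp
  qed
  moreover have "insert x W \<subseteq> span V"
    using W(2) x(1) span_superset by blast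
  ultimately have "dim V = dim (insert x W)"
    by (intro span_eq_dim) (simp add: span_eq)
  also have "\<dots> = dim W + 1"
  proof (rule dim_insert_not_in_span)
    show "x \<notin> span W" using x(2) W(1) span_eq_iff by metis
    show "W \<subseteq> span T" using W(2) T(2) by blast
  qed (rule T(1))
  finally show ?thesis .
qed

lemma lookup_smult3 [simp]: "Poly_Mapping.lookup (smult3 c p) m = c * Poly_Mapping.lookup p m"
  unfolding smult3_def by transfer (auto simp: when_def)

interpretation poly3: vector_space "smult3 :: 'k::field \<Rightarrow> 'k poly3 \<Rightarrow> 'k poly3"
  by unfold_locales (auto intro!: poly_mapping_eqI simp: lookup_add algebra_simps)

abbreviation monomial3 :: "mon3 \<Rightarrow> 'k::field poly3" where
  "monomial3 \<nu> \<equiv> Poly_Mapping.single \<nu> 1"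

lemma mdeg_triple [simp]: "mdeg (a, b, c) = a + b + c"
  by (simp add: mdeg_def)

lemma lookup_single_mult:
  fixes g :: "'k::field poly3"
  shows "Poly_Mapping.lookup (Poly_Mapping.single (a, b, c) k * g) (x, y, z) =
     (if a \<le> x \<and> b \<le> y \<and> c \<le> z then k * Poly_Mapping.lookup g (x - a, y - b, z - c) else 0)"
proof -
  have "Poly_Mapping.lookup (Poly_Mapping.single (a, b, c) k * g) (x, y, z) =
      k * (\<Sum>q. Poly_Mapping.lookup g q when (x, y, z) = (a, b, c) + q)"
    unfolding lookup_mult lookup_single by (simp add: when_mult)
  also have "(\<lambda>q. Poly_Mapping.lookup g q when (x, y, z) = (a, b, c) + q) =
     (\<lambda>q. if a \<le> x \<and> b \<le> y \<and> c \<le> z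
          then Poly_Mapping.lookup g q when q = (x - a, y - b, z - c) else 0)"
    by (auto simp: fun_eq_iff when_def)
  finally show ?thesis
    by (cases "a \<le> x \<and> b \<le> y \<and> c \<le> z") auto
qed

lemma monomial3_mult_single_mult:
  "monomial3 \<nu> * Poly_Mapping.single \<mu> c * f = smult3 c (monomial3 (\<nu> + \<mu>) * (f :: 'k::field poly3))"
  unfolding mult_single by (rule poly_mapping_eqI, cases "\<nu> + \<mu>") (auto simp: lookup_single_mult)

lemma poly_mapping_single_expansion:
  "p = (\<Sum>m\<in>Poly_Mapping.keys p. Poly_Mapping.single m (Poly_Mapping.lookup p m))"
  by (rule poly_mapping_eqI)
    (auto simp: lookup_sum lookup_single when_def in_keys_iff)

lemma smult3_single: "smult3 c (monomial3 m) = Poly_Mapping.single m c"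
  by (rule poly_mapping_eqI) (simp add: lookup_single when_def)

lemma keys_smult3_subset: "Poly_Mapping.keys (smult3 c f) \<subseteq> Poly_Mapping.keys f"
  by (auto simp: in_keys_iff)

lemma in_span_monomials:
  assumes "Poly_Mapping.keys (f :: 'k::field poly3) \<subseteq> S"
  shows "f \<in> poly3.span (monomial3 ` S)"
proof -
  have "f = (\<Sum>m\<in>Poly_Mapping.keys f. smult3 (Poly_Mapping.lookup f m) (monomial3 m))"
    unfolding smult3_single by (rule poly_mapping_single_expansion)
  also have "\<dots> \<in> poly3.span (monomial3 ` S)"
    using assms by (intro poly3.span_sum poly3.span_scale poly3.span_base) auto
  finally show ?thesis .
qed

lemma lookup_hcomp: "Poly_Mapping.lookup (hcomp i f) m = (if mdeg m = i then Poly_Mapping.lookup f m else 0)"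
  unfolding hcomp_def lookup_mapp by (auto simp: when_def in_keys_iff)

lemma lookup_monomial3_mult_hcomp:
  "Poly_Mapping.lookup (monomial3 \<nu> * hcomp i (f :: 'k::field poly3)) m
     = (if mdeg \<nu> + i = mdeg m then Poly_Mapping.lookup (monomial3 \<nu> * f) m else 0)"
  by (cases \<nu>; cases m) (auto simp: lookup_single_mult lookup_hcomp)

lemma hcomp_homog_part: "f \<in> homog_part n \<Longrightarrow> hcomp n f = f"
  by (rule poly_mapping_eqI) (auto simp: lookup_hcomp homog_part_def in_keys_iff)

lemma hcomp_in_homog_part: "hcomp n f \<in> homog_part n"
  by (auto simp: homog_part_def in_keys_iff lookup_hcomp split: if_splits)

lemma lookup_monomial3_mult_homog_part:
  assumes "f \<in> homog_part n" and "mdeg \<nu> + n \<noteq> mdeg m"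
  shows "Poly_Mapping.lookup (monomial3 \<nu> * (f :: 'k::field poly3)) m = 0"
  using lookup_monomial3_mult_hcomp[of \<nu> n f m] assms by (simp add: hcomp_homog_part)

definition deg_mons :: "nat \<Rightarrow> mon3 set" where
  "deg_mons n = {m. mdeg m = n}"

lemma finite_deg_mons: "finite (deg_mons n)"
proof -
  have "deg_mons n \<subseteq> {..n} \<times> {..n} \<times> {..n}"
    unfolding deg_mons_def mdeg_def by auto
  then show ?thesis
    by (rule finite_subset) auto
qed

section \<open>Spaces cut out by coefficient sums over disjoint groups\<close>

definition coeff_sum :: "mon3 set \<Rightarrow> 'k::field poly3 \<Rightarrow> 'k" where
  "coeff_sum G f = (\<Sum>m\<in>G. Poly_Mapping.lookup f m)"

lemma coeff_sum_zero [simp]: "coeff_sum G 0 = 0"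
  by (simp add: coeff_sum_def)

lemma coeff_sum_add: "coeff_sum G (f + g) = coeff_sum G f + coeff_sum G g"
  by (simp add: coeff_sum_def lookup_add sum.distrib)

lemma coeff_sum_diff: "coeff_sum G (f - g) = coeff_sum G f - coeff_sum G g"
  by (simp add: coeff_sum_def lookup_minus sum_subtractf)

lemma coeff_sum_smult3: "coeff_sum G (smult3 c f) = c * coeff_sum G f"
  by (simp add: coeff_sum_def sum_distrib_left)

lemma coeff_sum_sum: "coeff_sum G (\<Sum>i\<in>I. f i) = (\<Sum>i\<in>I. coeff_sum G (f i))"
  unfolding coeff_sum_def lookup_sum by (rule sum.swap)

lemma coeff_sum_monomial3: "coeff_sum G (monomial3 p) = (if finite G \<and> p \<in> G then 1 else 0)"
  by (cases "finite G") (simp_all add: coeff_sum_def lookup_single when_def)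

lemma coeff_sum_singleton [simp]: "coeff_sum {m} f = Poly_Mapping.lookup f m"
  by (simp add: coeff_sum_def)

lemma coeff_sum_monomial3_mult_homog_part:
  assumes "G \<subseteq> deg_mons s" and "f \<in> homog_part n" and "mdeg \<nu> + n \<noteq> s"
  shows "coeff_sum G (monomial3 \<nu> * (f :: 'k::field poly3)) = 0"
  unfolding coeff_sum_def
proof (intro sum.neutral ballI)
  fix m assume "m \<in> G"
  then have "mdeg \<nu> + n \<noteq> mdeg m"
    using assms(1,3) by (auto simp: deg_mons_def)
  then show "Poly_Mapping.lookup (monomial3 \<nu> * f) m = 0"
    by (rule lookup_monomial3_mult_homog_part[OF assms(2)])
qed

lemma coeff_sum_monomial3_mult_hcomp:
  assumes "G \<subseteq> deg_mons s"
  shows "coeff_sum G (monomial3 \<nu> * hcomp i (f :: 'k::field poly3))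
     = (if mdeg \<nu> + i = s then coeff_sum G (monomial3 \<nu> * f) else 0)"
  using assms unfolding coeff_sum_def deg_mons_def
  by (auto simp: lookup_monomial3_mult_hcomp intro!: sum.cong sum.neutral)

lemma coeff_sum_monomial3_mult_mult:
  "coeff_sum G (monomial3 \<nu> * (r * f)) =
     (\<Sum>\<mu>\<in>Poly_Mapping.keys r. Poly_Mapping.lookup r \<mu> * coeff_sum G (monomial3 (\<nu> + \<mu>) * (f :: 'k::field poly3)))"
proof -
  have "monomial3 \<nu> * (r * f) =
      (\<Sum>\<mu>\<in>Poly_Mapping.keys r. monomial3 \<nu> * Poly_Mapping.single \<mu> (Poly_Mapping.lookup r \<mu>) * f)"
    by (subst poly_mapping_single_expansion[of r])
      (simp add: sum_distrib_left sum_distrib_right mult.assoc)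
  also have "\<dots> = (\<Sum>\<mu>\<in>Poly_Mapping.keys r. smult3 (Poly_Mapping.lookup r \<mu>) (monomial3 (\<nu> + \<mu>) * f))"
    by (simp only: monomial3_mult_single_mult)
  finally show ?thesis
    by (simp add: coeff_sum_sum coeff_sum_smult3)
qed

definition group_sum_space :: "mon3 set \<Rightarrow> mon3 set set \<Rightarrow> 'k::field poly3 set" where
  "group_sum_space S GG = {f. Poly_Mapping.keys f \<subseteq> S \<and> (\<forall>G\<in>GG. coeff_sum G f = 0)}"

lemma subspace_group_sum_space: "poly3.subspace (group_sum_space S GG :: 'k::field poly3 set)"
proof -
  have "f + g \<in> group_sum_space S GG"
    if "f \<in> group_sum_space S GG" "g \<in> group_sum_space S GG" for f g :: "'k poly3"
  proof -
    have "Poly_Mapping.keys (f + g) \<subseteq> S"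
      using that keys_add[of f g] unfolding group_sum_space_def by blast
    then show ?thesis
      using that unfolding group_sum_space_def by (simp add: coeff_sum_add)
  qed
  moreover have "smult3 c f \<in> group_sum_space S GG"
    if "f \<in> group_sum_space S GG" for c and f :: "'k poly3"
  proof -
    have "Poly_Mapping.keys (smult3 c f) \<subseteq> S"
      using that keys_smult3_subset[of c f] unfolding group_sum_space_def by blast
    then show ?thesis
      using that unfolding group_sum_space_def by (simp add: coeff_sum_smult3)
  qed
  moreover have "0 \<in> group_sum_space S GG"
    by (simp add: group_sum_space_def)
  ultimately show ?thesis
    unfolding poly3.subspace_def by blast
qed

lemma dim_group_sum_space_insert:
  assumes S: "finite S" and G: "p \<in> G" "G \<subseteq> S" and other: "\<And>H. H \<in> GG \<Longrightarrow> p \<notin> H"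
  shows "poly3.dim (group_sum_space S GG :: 'k::field poly3 set)
    = poly3.dim (group_sum_space S (insert G GG) :: 'k poly3 set) + 1"
proof (rule poly3.dim_codimension_one)
  let ?e = "monomial3 p :: 'k poly3"
  have "finite G"
    using G(2) S by (rule finite_subset)
  show "poly3.subspace (group_sum_space S (insert G GG) :: 'k poly3 set)"
    by (rule subspace_group_sum_space)
  show "group_sum_space S (insert G GG) \<subseteq> (group_sum_space S GG :: 'k poly3 set)"
    by (auto simp: group_sum_space_def)
  show "?e \<in> group_sum_space S GG"
    using G other by (auto simp: group_sum_space_def coeff_sum_monomial3)
  show "?e \<notin> group_sum_space S (insert G GG)"
    using G \<open>finite G\<close> by (auto simp: group_sum_space_def coeff_sum_monomial3)
  show "\<exists>c. f - smult3 c ?e \<in> group_sum_space S (insert G GG)"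
    if f: "f \<in> group_sum_space S GG" for f
  proof
    have "Poly_Mapping.keys (f - smult3 (coeff_sum G f) ?e) \<subseteq> S"
    proof
      fix m assume "m \<in> Poly_Mapping.keys (f - smult3 (coeff_sum G f) ?e)"
      then have "m = p \<or> m \<in> Poly_Mapping.keys f"
        by (auto simp: in_keys_iff lookup_minus lookup_single when_def split: if_splits)
      then show "m \<in> S"
        using f G by (auto simp: group_sum_space_def)
    qed
    then show "f - smult3 (coeff_sum G f) ?e \<in> group_sum_space S (insert G GG)"
      using f G other \<open>finite G\<close>
      by (auto simp: group_sum_space_def coeff_sum_diff coeff_sum_smult3 coeff_sum_monomial3)
  qed
  show "group_sum_space S GG \<subseteq> poly3.span (monomial3 ` S)"
    unfolding group_sum_space_def by (blast intro: in_span_monomials)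
qed (use S in simp)

lemma dim_group_sum_space_no_groups:
  assumes "finite S"
  shows "poly3.dim (group_sum_space S {} :: 'k::field poly3 set) = card S"
  using assms
proof (induction S rule: finite_induct)
  case empty
  have "group_sum_space {} {} = ({0} :: 'k poly3 set)"
    by (auto simp: group_sum_space_def)
  moreover have "poly3.dim ({0} :: 'k poly3 set) = poly3.dim ({} :: 'k poly3 set)"
    by (rule poly3.span_eq_dim) simp
  ultimately show ?case
    using poly3.dim_eq_card_independent[OF poly3.independent_empty] by simp
next
  case (insert p S)
  have "group_sum_space (insert p S) {{p}} = (group_sum_space S {} :: 'k poly3 set)"
    using insert.hyps(2) by (auto simp: group_sum_space_def in_keys_iff)
  moreover have "poly3.dim (group_sum_space (insert p S) {} :: 'k poly3 set)
      = poly3.dim (group_sum_space (insert p S) {{p}} :: 'k poly3 set) + 1"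
    using insert.hyps(1) by (intro dim_group_sum_space_insert) auto
  ultimately show ?case
    using insert.hyps insert.IH by simp
qed

lemma dim_group_sum_space:
  assumes S: "finite S" and disj: "pairwise disjnt GG"
    and groups: "\<And>G. G \<in> GG \<Longrightarrow> G \<noteq> {} \<and> G \<subseteq> S"
  shows "poly3.dim (group_sum_space S GG :: 'k::field poly3 set) + card GG = card S"
proof -
  have "GG \<subseteq> Pow S"
    using groups by blast
  then have "finite GG"
    using S by (rule finite_subset[OF _ iffD2[OF finite_Pow_iff]])
  then show ?thesis
    using disj groups
  proof (induction GG rule: finite_induct)
    case empty
    then show ?case
      using dim_group_sum_space_no_groups[OF S] by simp
  next
    case (insert G GG)
    obtain p where p: "p \<in> G" "G \<subseteq> S"
      using insert.prems(2) by blast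
    have "p \<notin> H" if "H \<in> GG" for H
    proof -
      have "G \<noteq> H"
        using insert.hyps(2) that by blast
      then have "disjnt G H"
        using insert.prems(1) that by (simp add: pairwise_insert)
      then show ?thesis
        using p(1) unfolding disjnt_def by blast
    qed
    then have "poly3.dim (group_sum_space S GG :: 'k poly3 set)
        = poly3.dim (group_sum_space S (insert G GG) :: 'k poly3 set) + 1"
      using S p by (intro dim_group_sum_space_insert)
    moreover have "poly3.dim (group_sum_space S GG :: 'k poly3 set) + card GG = card S"
    proof (rule insert.IH)
      show "pairwise disjnt GG"
        using insert.prems(1) by (rule pairwise_subset) blast
      show "\<And>H. H \<in> GG \<Longrightarrow> H \<noteq> {} \<and> H \<subseteq> S"
        using insert.prems(2) by blast
    qed
    ultimately show ?case
      using insert.hyps by simp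
  qed
qed

lemma homog_part_eq_group_sum_space: "homog_part n = group_sum_space (deg_mons n) {}"
  unfolding homog_part_def group_sum_space_def deg_mons_def by auto

lemma hilb3_eq_card_groups:
  assumes slice: "I \<inter> homog_part n = group_sum_space (deg_mons n) GG"
    and disj: "pairwise disjnt GG" and groups: "\<And>G. G \<in> GG \<Longrightarrow> G \<noteq> {} \<and> G \<subseteq> deg_mons n"
  shows "hilb3 (I :: 'k::field poly3 set) n = card GG"
proof -
  have "poly3.dim (homog_part n :: 'k poly3 set) = card (deg_mons n)"
    using dim_group_sum_space[of "deg_mons n" "{}", where 'k='k] finite_deg_mons
    by (simp add: homog_part_eq_group_sum_space)
  moreover have "poly3.dim (I \<inter> homog_part n) + card GG = card (deg_mons n)"
    unfolding slice using finite_deg_mons disj groups by (rule dim_group_sum_space)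
  ultimately show ?thesis
    unfolding hilb3_def by simp
qed

section \<open>Ideals of inverse systems\<close>

text \<open>Macaulay duality: \<open>ann_ideal \<G>\<close> is the annihilator, under contraction, of the forms
  \<open>\<Sum>m\<in>G. X\<^sup>m\<close> (\<open>G \<in> \<G>\<close>) of the divided-power ring.\<close>
definition ann_ideal :: "mon3 set set \<Rightarrow> 'k::field poly3 set" where
  "ann_ideal \<G> = {f. \<forall>\<nu>. \<forall>G\<in>\<G>. coeff_sum G (monomial3 \<nu> * f) = 0}"

lemma ann_idealI:
  "(\<And>\<nu> G. G \<in> \<G> \<Longrightarrow> coeff_sum G (monomial3 \<nu> * f) = 0) \<Longrightarrow> f \<in> ann_ideal \<G>"
  by (simp add: ann_ideal_def)

lemma ann_idealD: "f \<in> ann_ideal \<G> \<Longrightarrow> G \<in> \<G> \<Longrightarrow> coeff_sum G (monomial3 \<nu> * f) = 0"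
  unfolding ann_ideal_def by blast

lemma is_ideal3_ann_ideal: "is_ideal3 (ann_ideal \<G> :: 'k::field poly3 set)"
  unfolding is_ideal3_def
proof (intro conjI ballI allI)
  show "0 \<in> (ann_ideal \<G> :: 'k poly3 set)"
    by (rule ann_idealI) simp
  show "f + g \<in> ann_ideal \<G>" if "f \<in> ann_ideal \<G>" "g \<in> ann_ideal \<G>" for f g :: "'k poly3"
    using that by (intro ann_idealI) (simp add: distrib_left coeff_sum_add ann_idealD)
  show "r * f \<in> ann_ideal \<G>" if "f \<in> ann_ideal \<G>" for r f :: "'k poly3"
    using that by (intro ann_idealI) (simp add: coeff_sum_monomial3_mult_mult ann_idealD)
qed

lemma homogeneous_ideal3_ann_ideal:
  assumes "\<And>G. G \<in> \<G> \<Longrightarrow> G \<subseteq> deg_mons s"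
  shows "homogeneous_ideal3 (ann_ideal \<G> :: 'k::field poly3 set)"
  unfolding homogeneous_ideal3_def
proof (intro conjI ballI allI is_ideal3_ann_ideal)
  fix f :: "'k poly3" and i assume f: "f \<in> ann_ideal \<G>"
  show "hcomp i f \<in> ann_ideal \<G>"
  proof (rule ann_idealI)
    fix \<nu> G assume G: "G \<in> \<G>"
    show "coeff_sum G (monomial3 \<nu> * hcomp i f) = 0"
      by (simp add: coeff_sum_monomial3_mult_hcomp[OF assms[OF G]] ann_idealD[OF f G])
  qed
qed

lemma homog_part_subset_ann_ideal:
  assumes "\<And>G. G \<in> \<G> \<Longrightarrow> G \<subseteq> deg_mons s" and "s < n"
  shows "homog_part n \<subseteq> (ann_ideal \<G> :: 'k::field poly3 set)"
proof
  fix f :: "'k poly3" assume f: "f \<in> homog_part n"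
  show "f \<in> ann_ideal \<G>"
  proof (rule ann_idealI)
    fix \<nu> G assume "G \<in> \<G>"
    with assms f show "coeff_sum G (monomial3 \<nu> * f) = 0"
      by (intro coeff_sum_monomial3_mult_homog_part) auto
  qed
qed

lemma artinian3_ann_ideal:
  assumes "\<And>G. G \<in> \<G> \<Longrightarrow> G \<subseteq> deg_mons s"
  shows "artinian3 (ann_ideal \<G> :: 'k::field poly3 set)"
  unfolding artinian3_def
proof (intro exI allI impI)
  fix n assume "Suc s \<le> n"
  then have "ann_ideal \<G> \<inter> homog_part n = (homog_part n :: 'k poly3 set)"
    using homog_part_subset_ann_ideal[OF assms, of _ n] by auto
  then show "hilb3 (ann_ideal \<G> :: 'k poly3 set) n = 0"
    by (simp add: hilb3_def)
qed

lemma monomial3_eq_mult_var3: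
  assumes "\<nu> \<noteq> 0"
  obtains \<nu>' j where "j < 3" and "monomial3 \<nu> = (monomial3 \<nu>' :: 'k::field poly3) * var3 j"
proof -
  obtain a b c where \<nu>: "\<nu> = (a, b, c)"
    by (cases \<nu>) auto
  consider "a > 0" | "a = 0" "b > 0" | "a = 0" "b = 0" "c > 0"
    using assms \<nu> by (auto simp: zero_prod_def)
  then show thesis
  proof cases
    case 1
    then have "monomial3 \<nu> = (monomial3 (a - 1, b, c) :: 'k poly3) * var3 0"
      by (simp add: \<nu> var3_def mult_single)
    then show thesis by (rule that[rotated]) simp
  next
    case 2
    then have "monomial3 \<nu> = (monomial3 (a, b - 1, c) :: 'k poly3) * var3 1"
      by (simp add: \<nu> var3_def mult_single)
    then show thesis by (rule that[rotated]) simp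
  next
    case 3
    then have "monomial3 \<nu> = (monomial3 (a, b, c - 1) :: 'k poly3) * var3 2"
      by (simp add: \<nu> var3_def mult_single)
    then show thesis by (rule that[rotated]) simp
  qed
qed

text \<open>A socle element \<open>f\<close> is congruent to \<open>hcomp s f\<close>: against the groups of degree \<open>s\<close>,
  \<open>x\<^sup>0\<close> only sees degree \<open>s\<close>, and any other \<open>x\<^sup>\<nu>\<close> factors through a variable,
  which already maps \<open>f\<close> into the ideal.\<close>
lemma level3_ann_ideal:
  assumes groups: "\<And>G. G \<in> \<G> \<Longrightarrow> G \<subseteq> deg_mons s"
  shows "level3 (ann_ideal \<G> :: 'k::field poly3 set)"
  unfolding level3_def
proof (intro exI allI impI)
  fix f :: "'k poly3" assume socle: "in_socle3 (ann_ideal \<G>) f"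
  have "f - hcomp s f \<in> ann_ideal \<G>"
  proof (rule ann_idealI)
    fix \<nu> G assume G: "G \<in> \<G>"
    show "coeff_sum G (monomial3 \<nu> * (f - hcomp s f)) = 0"
    proof (cases "\<nu> = 0")
      case True
      then have "mdeg \<nu> = 0"
        by (simp add: mdeg_def zero_prod_def)
      then have "coeff_sum G (monomial3 \<nu> * hcomp s f) = coeff_sum G (monomial3 \<nu> * f)"
        by (simp add: coeff_sum_monomial3_mult_hcomp[OF groups[OF G]])
      then show ?thesis
        by (simp add: right_diff_distrib coeff_sum_diff)
    next
      case False
      then obtain \<nu>' j where j: "j < 3" and \<nu>: "monomial3 \<nu> = (monomial3 \<nu>' :: 'k poly3) * var3 j"
        by (rule monomial3_eq_mult_var3)
      have "coeff_sum G (monomial3 \<nu>' * (f * var3 j)) = 0"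
        using socle j G unfolding in_socle3_def by (blast intro: ann_idealD)
      moreover have "coeff_sum G (monomial3 \<nu> * hcomp s f) = 0"
        using False by (intro coeff_sum_monomial3_mult_homog_part[OF groups[OF G] hcomp_in_homog_part])
          (cases \<nu>, auto simp: zero_prod_def)
      ultimately show ?thesis
        by (simp add: right_diff_distrib coeff_sum_diff \<nu> mult.assoc mult.commute[of "var3 j"])
    qed
  qed
  then show "\<exists>g \<in> homog_part s. f - g \<in> ann_ideal \<G>"
    using hcomp_in_homog_part by blast
qed

lemma ann_ideal_inter_homog_part:
  assumes groups: "\<And>G. G \<in> \<G> \<Longrightarrow> G \<subseteq> deg_mons s"
  shows "ann_ideal \<G> \<inter> homog_part n =
    {f :: 'k::field poly3. f \<in> homog_part n \<and>
      (\<forall>\<nu>. mdeg \<nu> + n = s \<longrightarrow> (\<forall>G\<in>\<G>. coeff_sum G (monomial3 \<nu> * f) = 0))}"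
proof (intro equalityI subsetI)
  fix f assume "f \<in> ann_ideal \<G> \<inter> homog_part n"
  then show "f \<in> {f. f \<in> homog_part n \<and>
      (\<forall>\<nu>. mdeg \<nu> + n = s \<longrightarrow> (\<forall>G\<in>\<G>. coeff_sum G (monomial3 \<nu> * f) = 0))}"
    by (blast intro: ann_idealD)
next
  fix f :: "'k poly3"
  assume f: "f \<in> {f. f \<in> homog_part n \<and>
      (\<forall>\<nu>. mdeg \<nu> + n = s \<longrightarrow> (\<forall>G\<in>\<G>. coeff_sum G (monomial3 \<nu> * f) = 0))}"
  have "coeff_sum G (monomial3 \<nu> * f) = 0" if "G \<in> \<G>" for \<nu> G
  proof (cases "mdeg \<nu> + n = s")
    case True
    then show ?thesis using f that by blast
  next
    case False
    then show ?thesis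
      using f by (intro coeff_sum_monomial3_mult_homog_part[OF groups[OF that]]) auto
  qed
  then show "f \<in> ann_ideal \<G> \<inter> homog_part n"
    using f by (blast intro: ann_idealI)
qed

section \<open>The witness ideal\<close>

definition mons_z_le1 :: "nat \<Rightarrow> mon3 set" where
  "mons_z_le1 n = {m \<in> deg_mons n. snd (snd m) \<le> 1}"

lemma card_mons_z_le1:
  assumes "n \<ge> 1"
  shows "card (mons_z_le1 n) = 2 * n + 1"
proof -
  have split: "mons_z_le1 n = (\<lambda>a. (a, n - a, 0)) ` {..n} \<union> (\<lambda>a. (a, n - 1 - a, 1)) ` {..n - 1}"
  proof
    show "mons_z_le1 n \<subseteq> (\<lambda>a. (a, n - a, 0)) ` {..n} \<union> (\<lambda>a. (a, n - 1 - a, 1)) ` {..n - 1}"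
    proof
      fix m assume "m \<in> mons_z_le1 n"
      then obtain a b c where "m = (a, b, c)" "a + b + c = n" "c \<le> 1"
        unfolding mons_z_le1_def deg_mons_def by (cases m) auto
      then show "m \<in> (\<lambda>a. (a, n - a, 0)) ` {..n} \<union> (\<lambda>a. (a, n - 1 - a, 1)) ` {..n - 1}"
        by (cases c) (auto simp: image_iff)
    qed
    show "(\<lambda>a. (a, n - a, 0)) ` {..n} \<union> (\<lambda>a. (a, n - 1 - a, 1)) ` {..n - 1} \<subseteq> mons_z_le1 n"
      using assms unfolding mons_z_le1_def deg_mons_def by auto
  qed
  have "card ((\<lambda>a. (a, n - a, 0::nat)) ` {..n}) = n + 1"
    by (subst card_image) (auto simp: inj_on_def)
  moreover have "card ((\<lambda>a. (a, n - 1 - a, 1::nat)) ` {..n - 1}) = n"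
    using assms by (subst card_image) (auto simp: inj_on_def)
  moreover have "(\<lambda>a. (a, n - a, 0::nat)) ` {..n} \<inter> (\<lambda>a. (a, n - 1 - a, 1)) ` {..n - 1} = {}"
    by auto
  ultimately show ?thesis
    unfolding split by (simp add: card_Un_disjoint)
qed

lemma vanishes_on_mons_z_le1_iff:
  assumes f: "f \<in> homog_part n" and "n \<le> s"
  shows "(\<forall>\<nu>. mdeg \<nu> + n = s \<longrightarrow> (\<forall>m\<in>mons_z_le1 s. Poly_Mapping.lookup (monomial3 \<nu> * f) m = 0))
     \<longleftrightarrow> (\<forall>m\<in>mons_z_le1 n. Poly_Mapping.lookup (f :: 'k::field poly3) m = 0)"
proof
  assume all: "\<forall>\<nu>. mdeg \<nu> + n = s \<longrightarrow> (\<forall>m\<in>mons_z_le1 s. Poly_Mapping.lookup (monomial3 \<nu> * f) m = 0)"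
  show "\<forall>m\<in>mons_z_le1 n. Poly_Mapping.lookup f m = 0"
  proof
    fix m assume m: "m \<in> mons_z_le1 n"
    obtain a b c where abc: "m = (a, b, c)" by (cases m)
    have "(a + (s - n), b, c) \<in> mons_z_le1 s"
      using m \<open>n \<le> s\<close> unfolding abc mons_z_le1_def deg_mons_def by auto
    then have "Poly_Mapping.lookup (monomial3 (s - n, 0, 0) * f) (a + (s - n), b, c) = 0"
      using all \<open>n \<le> s\<close> by simp
    then show "Poly_Mapping.lookup f m = 0"
      unfolding abc lookup_single_mult by simp
  qed
next
  assume vanish: "\<forall>m\<in>mons_z_le1 n. Poly_Mapping.lookup f m = 0"
  show "\<forall>\<nu>. mdeg \<nu> + n = s \<longrightarrow> (\<forall>m\<in>mons_z_le1 s. Poly_Mapping.lookup (monomial3 \<nu> * f) m = 0)"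
  proof (intro allI impI ballI)
    fix \<nu> m assume \<nu>: "mdeg \<nu> + n = s" and m: "m \<in> mons_z_le1 s"
    obtain a b c where \<nu>_abc: "\<nu> = (a, b, c)" by (cases \<nu>)
    obtain x y z where m_xyz: "m = (x, y, z)" by (cases m)
    have "Poly_Mapping.lookup f (x - a, y - b, z - c) = 0" if "a \<le> x" "b \<le> y" "c \<le> z"
    proof (cases "mdeg (x - a, y - b, z - c) = n")
      case True
      then have "(x - a, y - b, z - c) \<in> mons_z_le1 n"
        using m unfolding m_xyz mons_z_le1_def deg_mons_def by auto
      then show ?thesis using vanish by blast
    next
      case False
      then have "(x - a, y - b, z - c) \<notin> Poly_Mapping.keys f"
        using f unfolding homog_part_def by blast
      then show ?thesis
        by (simp add: in_keys_iff)
    qed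
    then show "Poly_Mapping.lookup (monomial3 \<nu> * f) m = 0"
      unfolding \<nu>_abc m_xyz lookup_single_mult by simp
  qed
qed

text \<open>The support of \<open>F\<close>; \<open>mons_z_le1 (d + 1)\<close> supplies the dual monomials with \<open>c \<le> 1\<close>.\<close>
definition witness_form :: "nat \<Rightarrow> mon3 set" where
  "witness_form d = {(0, 0, d + 1), (0, d - 1, 2), (d - 3, 1, 3)}"

definition witness_groups :: "nat \<Rightarrow> mon3 set set" where
  "witness_groups d = (\<lambda>m. {m}) ` mons_z_le1 (d + 1) \<union> {witness_form d}"

definition witness_ideal :: "nat \<Rightarrow> 'k::field poly3 set" where
  "witness_ideal d = ann_ideal (witness_groups d)"

lemma coeff_sum_witness_form:
  assumes "d \<ge> 3"
  shows "coeff_sum (witness_form d) f =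
    Poly_Mapping.lookup f (0, 0, d + 1) + Poly_Mapping.lookup f (0, d - 1, 2) + Poly_Mapping.lookup f (d - 3, 1, 3)"
  using assms by (simp add: coeff_sum_def witness_form_def)

lemma witness_groups_deg_mons:
  assumes "d \<ge> 3" and "G \<in> witness_groups d"
  shows "G \<subseteq> deg_mons (d + 1)"
  using assms by (auto simp: witness_groups_def witness_form_def mons_z_le1_def deg_mons_def)

lemma witness_ideal_inter_homog_part:
  assumes "d \<ge> 3" and "n \<le> d + 1"
  shows "witness_ideal d \<inter> homog_part n =
    {f :: 'k::field poly3. f \<in> homog_part n \<and> (\<forall>m\<in>mons_z_le1 n. Poly_Mapping.lookup f m = 0) \<and>
      (\<forall>\<nu>. mdeg \<nu> + n = d + 1 \<longrightarrow> coeff_sum (witness_form d) (monomial3 \<nu> * f) = 0)}"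
proof -
  have groups: "(\<forall>G\<in>witness_groups d. coeff_sum G g = 0) \<longleftrightarrow>
      (\<forall>m\<in>mons_z_le1 (d + 1). Poly_Mapping.lookup g m = 0) \<and> coeff_sum (witness_form d) g = 0"
    for g :: "'k poly3"
    unfolding witness_groups_def by auto
  have "(\<forall>\<nu>. mdeg \<nu> + n = d + 1 \<longrightarrow> (\<forall>G\<in>witness_groups d. coeff_sum G (monomial3 \<nu> * f) = 0))
    \<longleftrightarrow> (\<forall>m\<in>mons_z_le1 n. Poly_Mapping.lookup f m = 0) \<and>
      (\<forall>\<nu>. mdeg \<nu> + n = d + 1 \<longrightarrow> coeff_sum (witness_form d) (monomial3 \<nu> * f) = 0)"
    if "f \<in> homog_part n" for f :: "'k poly3"
    unfolding groups vanishes_on_mons_z_le1_iff[OF that assms(2), symmetric] by blast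
  moreover have "witness_ideal d \<inter> homog_part n = {f :: 'k poly3. f \<in> homog_part n \<and>
      (\<forall>\<nu>. mdeg \<nu> + n = d + 1 \<longrightarrow> (\<forall>G\<in>witness_groups d. coeff_sum G (monomial3 \<nu> * f) = 0))}"
    unfolding witness_ideal_def
    by (rule ann_ideal_inter_homog_part) (rule witness_groups_deg_mons[OF assms(1)])
  ultimately show ?thesis
    by (simp only:) (intro Collect_cong, blast)
qed

text \<open>\<open>E\<close> expresses, modulo the vanishing on \<open>mons_z_le1 n\<close>, the conditions that the
  contractions of \<open>F\<close> impose in degree \<open>n\<close>.\<close>
lemma hilb3_witness_ideal:
  assumes d: "d \<ge> 3" and n: "1 \<le> n" "n \<le> d + 1"
    and E: "finite E" "pairwise disjnt E"
      "\<And>G. G \<in> E \<Longrightarrow> G \<noteq> {} \<and> G \<subseteq> deg_mons n - mons_z_le1 n"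
    and reduced: "\<And>f :: 'k::field poly3. Poly_Mapping.keys f \<subseteq> deg_mons n \<Longrightarrow>
      (\<forall>m\<in>mons_z_le1 n. Poly_Mapping.lookup f m = 0) \<Longrightarrow>
      (\<forall>\<nu>. mdeg \<nu> + n = d + 1 \<longrightarrow> coeff_sum (witness_form d) (monomial3 \<nu> * f) = 0)
        \<longleftrightarrow> (\<forall>G\<in>E. coeff_sum G f = 0)"
  shows "hilb3 (witness_ideal d :: 'k poly3 set) n = 2 * n + 1 + card E"
proof -
  define GG where "GG = (\<lambda>m. {m}) ` mons_z_le1 n \<union> E"
  have "f \<in> witness_ideal d \<inter> homog_part n \<longleftrightarrow> f \<in> group_sum_space (deg_mons n) GG"
    for f :: "'k poly3"
  proof -
    have "(\<forall>G\<in>GG. coeff_sum G f = 0) \<longleftrightarrow>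
        (\<forall>m\<in>mons_z_le1 n. coeff_sum {m} f = 0) \<and> (\<forall>G\<in>E. coeff_sum G f = 0)"
      unfolding GG_def by blast
    then have "(\<forall>G\<in>GG. coeff_sum G f = 0) \<longleftrightarrow>
        (\<forall>m\<in>mons_z_le1 n. Poly_Mapping.lookup f m = 0) \<and> (\<forall>G\<in>E. coeff_sum G f = 0)"
      by simp
    moreover have "f \<in> homog_part n \<longleftrightarrow> Poly_Mapping.keys f \<subseteq> deg_mons n"
      by (simp add: homog_part_eq_group_sum_space group_sum_space_def)
    ultimately show ?thesis
      unfolding witness_ideal_inter_homog_part[OF d n(2)] group_sum_space_def
      using reduced[of f] by blast
  qed
  then have "witness_ideal d \<inter> homog_part n = (group_sum_space (deg_mons n) GG :: 'k poly3 set)"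
    by blast
  moreover have "pairwise disjnt GG"
  proof (rule pairwiseI)
    fix G H assume G: "G \<in> GG" and H: "H \<in> GG" and "G \<noteq> H"
    consider "G \<in> E" "H \<in> E" | "G \<notin> E" | "H \<notin> E"
      by blast
    then show "disjnt G H"
    proof cases
      case 1
      then show ?thesis using E(2) \<open>G \<noteq> H\<close> by (auto dest: pairwiseD)
    next
      case 2
      then obtain m where "G = {m}" "m \<in> mons_z_le1 n"
        using G unfolding GG_def by blast
      then show ?thesis
        using H E(3) \<open>G \<noteq> H\<close> unfolding GG_def disjnt_def by blast
    next
      case 3
      then obtain m where "H = {m}" "m \<in> mons_z_le1 n"
        using H unfolding GG_def by blast
      then show ?thesis
        using G E(3) \<open>G \<noteq> H\<close> unfolding GG_def disjnt_def by blast
    qed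
  qed
  moreover have "G \<noteq> {} \<and> G \<subseteq> deg_mons n" if "G \<in> GG" for G
    using that E(3) unfolding GG_def mons_z_le1_def by auto
  ultimately have "hilb3 (witness_ideal d :: 'k poly3 set) n = card GG"
    by (rule hilb3_eq_card_groups)
  also have "card GG = card ((\<lambda>m. {m}) ` mons_z_le1 n) + card E"
    unfolding GG_def
  proof (rule card_Un_disjoint)
    show "finite ((\<lambda>m. {m}) ` mons_z_le1 n)"
      using finite_deg_mons[of n] unfolding mons_z_le1_def by simp
    show "(\<lambda>m. {m}) ` mons_z_le1 n \<inter> E = {}"
      using E(3) by blast
  qed (rule E(1))
  also have "card ((\<lambda>m. {m}) ` mons_z_le1 n) = card (mons_z_le1 n)"
    by (rule card_image) (simp add: inj_on_def)
  finally show ?thesis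
    using card_mons_z_le1[OF n(1)] by simp
qed

lemma all_mdeg_eq_0_iff: "(\<forall>\<nu>. mdeg \<nu> = 0 \<longrightarrow> P \<nu>) \<longleftrightarrow> P (0, 0, 0)"
proof -
  have "mdeg \<nu> = 0 \<longleftrightarrow> \<nu> = (0, 0, 0)" for \<nu>
    by (cases \<nu>) auto
  then show ?thesis
    by (simp only: imp_disjL all_conj_distrib) simp
qed

lemma all_mdeg_eq_1_iff:
  "(\<forall>\<nu>. mdeg \<nu> = 1 \<longrightarrow> P \<nu>) \<longleftrightarrow> P (1, 0, 0) \<and> P (0, 1, 0) \<and> P (0, 0, 1)"
proof -
  have "mdeg \<nu> = 1 \<longleftrightarrow> \<nu> = (1, 0, 0) \<or> \<nu> = (0, 1, 0) \<or> \<nu> = (0, 0, 1)" for \<nu>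
    by (cases \<nu>) (auto simp: add_is_1)
  then show ?thesis
    by (simp only: imp_disjL all_conj_distrib) simp
qed

lemma all_mdeg_eq_2_iff:
  "(\<forall>\<nu>. mdeg \<nu> = 2 \<longrightarrow> P \<nu>) \<longleftrightarrow>
     P (2, 0, 0) \<and> P (0, 2, 0) \<and> P (0, 0, 2) \<and> P (1, 1, 0) \<and> P (1, 0, 1) \<and> P (0, 1, 1)"
proof -
  have "mdeg \<nu> = 2 \<longleftrightarrow> \<nu> = (2, 0, 0) \<or> \<nu> = (0, 2, 0) \<or> \<nu> = (0, 0, 2) \<or>
      \<nu> = (1, 1, 0) \<or> \<nu> = (1, 0, 1) \<or> \<nu> = (0, 1, 1)" for \<nu>
  proof (cases \<nu>)
    case (fields a b c)
    then show ?thesis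
      by (cases a; cases b; cases c) (auto simp: numeral_2_eq_2)
  qed
  then show ?thesis
    by (simp only: imp_disjL all_conj_distrib) simp
qed

lemma hilb3_witness_ideal_degree_one:
  assumes "d \<ge> 3"
  shows "hilb3 (witness_ideal d :: 'k::field poly3 set) 1 = 3"
proof -
  have "hilb3 (witness_ideal d :: 'k poly3 set) 1 = 2 * 1 + 1 + card ({} :: mon3 set set)"
  proof (rule hilb3_witness_ideal)
    fix f :: "'k poly3"
    assume supp: "Poly_Mapping.keys f \<subseteq> deg_mons 1"
      and vanish: "\<forall>m\<in>mons_z_le1 1. Poly_Mapping.lookup f m = 0"
    have "deg_mons 1 = mons_z_le1 1"
      by (auto simp: deg_mons_def mons_z_le1_def mdeg_def)
    then have "f = 0"
      using supp vanish by (intro poly_mapping_eqI) (auto simp: in_keys_iff)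
    then show "(\<forall>\<nu>. mdeg \<nu> + 1 = d + 1 \<longrightarrow> coeff_sum (witness_form d) (monomial3 \<nu> * f) = 0)
        \<longleftrightarrow> (\<forall>G\<in>{}. coeff_sum G f = 0)"
      by simp
  qed (use assms in auto)
  then show ?thesis by simp
qed

lemma hilb3_witness_ideal_degree_d_minus_1:
  assumes "d \<ge> 5"
  shows "hilb3 (witness_ideal d :: 'k::field poly3 set) (d - 1) = 2 * d + 5"
proof -
  obtain k where d: "d = k + 5"
    using assms le_Suc_ex[of 5 d] by (auto simp: add.commute)
  define Z :: "mon3 set"
    where "Z = {(k, 1, 3), (0, k + 2, 2), (0, 0, k + 4), (k + 1, 0, 3), (k + 1, 1, 2), (k + 2, 0, 2)}"
  have "card Z = 6"
    unfolding Z_def by (simp add: card_insert_if)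
  then have "card ((\<lambda>m. {m}) ` Z) = 6"
    by (simp add: card_image)
  have "hilb3 (witness_ideal d :: 'k poly3 set) (d - 1) = 2 * (d - 1) + 1 + card ((\<lambda>m. {m}) ` Z)"
  proof (rule hilb3_witness_ideal)
    show "finite ((\<lambda>m. {m}) ` Z)" "pairwise disjnt ((\<lambda>m. {m}) ` Z)"
      unfolding Z_def pairwise_def disjnt_def by auto
    have "\<forall>m\<in>Z. mdeg m = d - 1 \<and> snd (snd m) \<ge> 2"
      unfolding Z_def d by simp
    then show "G \<noteq> {} \<and> G \<subseteq> deg_mons (d - 1) - mons_z_le1 (d - 1)" if "G \<in> (\<lambda>m. {m}) ` Z" for G
      using that by (auto simp: deg_mons_def mons_z_le1_def)
    fix f :: "'k poly3"
    assume "\<forall>m\<in>mons_z_le1 (d - 1). Poly_Mapping.lookup f m = 0"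
    moreover have "{(0, k + 4, 0), (k + 2, 1, 1), (0, k + 3, 1)} \<subseteq> mons_z_le1 (d - 1)"
      unfolding d by (simp add: deg_mons_def mons_z_le1_def)
    ultimately have vanish: "Poly_Mapping.lookup f (0, k + 4, 0) = 0"
      "Poly_Mapping.lookup f (k + 2, 1, 1) = 0" "Poly_Mapping.lookup f (0, k + 3, 1) = 0"
      by blast+
    have "(\<forall>\<nu>. mdeg \<nu> + (d - 1) = d + 1 \<longrightarrow> coeff_sum (witness_form d) (monomial3 \<nu> * f) = 0)
      \<longleftrightarrow> (\<forall>\<nu>. mdeg \<nu> = 2 \<longrightarrow> coeff_sum (witness_form d) (monomial3 \<nu> * f) = 0)"
    proof -
      have "mdeg \<nu> + (d - 1) = d + 1 \<longleftrightarrow> mdeg \<nu> = 2" for \<nu>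
        using assms by arith
      then show ?thesis by (simp only:)
    qed
    also have "\<dots> \<longleftrightarrow> (\<forall>m\<in>Z. Poly_Mapping.lookup f m = 0)"
      using vanish unfolding all_mdeg_eq_2_iff d Z_def
      by (simp add: coeff_sum_witness_form lookup_single_mult numeral_eq_Suc)
    also have "\<dots> \<longleftrightarrow> (\<forall>G\<in>(\<lambda>m. {m}) ` Z. coeff_sum G f = 0)"
      by simp
    finally show "(\<forall>\<nu>. mdeg \<nu> + (d - 1) = d + 1 \<longrightarrow> coeff_sum (witness_form d) (monomial3 \<nu> * f) = 0)
      \<longleftrightarrow> (\<forall>G\<in>(\<lambda>m. {m}) ` Z. coeff_sum G f = 0)" .
  qed (use assms in auto)
  then show ?thesis
    using \<open>card ((\<lambda>m. {m}) ` Z) = 6\<close> assms by simp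
qed

lemma hilb3_witness_ideal_degree_d:
  assumes "d \<ge> 4"
  shows "hilb3 (witness_ideal d :: 'k::field poly3 set) d = 2 * d + 4"
proof -
  obtain k where d: "d = k + 4"
    using assms le_Suc_ex[of 4 d] by (auto simp: add.commute)
  define E :: "mon3 set set"
    where "E = {{(k, 1, 3)}, {(0, k + 2, 2), (k + 1, 0, 3)}, {(0, 0, k + 4), (k + 1, 1, 2)}}"
  have "card E = 3"
    unfolding E_def by (simp add: card_insert_if doubleton_eq_iff)
  have "hilb3 (witness_ideal d :: 'k poly3 set) d = 2 * d + 1 + card E"
  proof (rule hilb3_witness_ideal)
    show "finite E" "pairwise disjnt E"
      unfolding E_def pairwise_def disjnt_def by auto
    show "G \<noteq> {} \<and> G \<subseteq> deg_mons d - mons_z_le1 d" if "G \<in> E" for G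
      using that unfolding E_def d by (auto simp: deg_mons_def mons_z_le1_def)
    fix f :: "'k poly3"
    assume "\<forall>m\<in>mons_z_le1 d. Poly_Mapping.lookup f m = 0"
    moreover have "(0, k + 3, 1) \<in> mons_z_le1 d"
      unfolding d by (simp add: deg_mons_def mons_z_le1_def)
    ultimately have vanish: "Poly_Mapping.lookup f (0, k + 3, 1) = 0"
      by blast
    have "(\<forall>\<nu>. mdeg \<nu> + d = d + 1 \<longrightarrow> coeff_sum (witness_form d) (monomial3 \<nu> * f) = 0)
      \<longleftrightarrow> (\<forall>\<nu>. mdeg \<nu> = 1 \<longrightarrow> coeff_sum (witness_form d) (monomial3 \<nu> * f) = 0)"
      by simp
    also have "\<dots> \<longleftrightarrow> Poly_Mapping.lookup f (k, 1, 3) = 0 \<and>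
        Poly_Mapping.lookup f (0, k + 2, 2) + Poly_Mapping.lookup f (k + 1, 0, 3) = 0 \<and>
        Poly_Mapping.lookup f (0, 0, k + 4) + Poly_Mapping.lookup f (k + 1, 1, 2) = 0"
      using vanish unfolding all_mdeg_eq_1_iff d
      by (simp add: coeff_sum_witness_form lookup_single_mult numeral_eq_Suc)
    also have "\<dots> \<longleftrightarrow> (\<forall>G\<in>E. coeff_sum G f = 0)"
      unfolding E_def by (simp add: coeff_sum_def)
    finally show "(\<forall>\<nu>. mdeg \<nu> + d = d + 1 \<longrightarrow> coeff_sum (witness_form d) (monomial3 \<nu> * f) = 0)
      \<longleftrightarrow> (\<forall>G\<in>E. coeff_sum G f = 0)" .
  qed (use assms in auto)
  then show ?thesis
    using \<open>card E = 3\<close> by simp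
qed

lemma hilb3_witness_ideal_degree_d_plus_1:
  assumes "d \<ge> 3"
  shows "hilb3 (witness_ideal d :: 'k::field poly3 set) (d + 1) = 2 * d + 4"
proof -
  have "hilb3 (witness_ideal d :: 'k poly3 set) (d + 1) = 2 * (d + 1) + 1 + card {witness_form d}"
  proof (rule hilb3_witness_ideal)
    show "G \<noteq> {} \<and> G \<subseteq> deg_mons (d + 1) - mons_z_le1 (d + 1)" if "G \<in> {witness_form d}" for G
      using that assms by (auto simp: witness_form_def deg_mons_def mons_z_le1_def)
    fix f :: "'k poly3"
    have "(\<forall>\<nu>. mdeg \<nu> + (d + 1) = d + 1 \<longrightarrow> coeff_sum (witness_form d) (monomial3 \<nu> * f) = 0)
        \<longleftrightarrow> coeff_sum (witness_form d) (monomial3 (0, 0, 0) * f) = 0"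
      using all_mdeg_eq_0_iff[of "\<lambda>\<nu>. coeff_sum (witness_form d) (monomial3 \<nu> * f) = 0"] by simp
    also have "monomial3 (0, 0, 0) * f = f"
      by (simp flip: zero_prod_def)
    finally show "(\<forall>\<nu>. mdeg \<nu> + (d + 1) = d + 1 \<longrightarrow> coeff_sum (witness_form d) (monomial3 \<nu> * f) = 0)
        \<longleftrightarrow> (\<forall>G\<in>{witness_form d}. coeff_sum G f = 0)"
      by simp
  qed (use assms in auto)
  then show ?thesis by simp
qed

theorem proposition4p9:
  fixes d :: nat
  assumes "d \<ge> 5"
  shows "\<exists>I :: 'k::field_char_0 poly3 set.
           homogeneous_ideal3 I \<and> artinian3 I \<and> level3 I \<and>
           hilb3 I 1 = 3 \<and>
           hilb3 I (d - 1) > hilb3 I d \<and>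
           hilb3 I d = 2 * d + 4 \<and> hilb3 I (d + 1) = 2 * d + 4"
proof (intro exI conjI)
  let ?I = "witness_ideal d :: 'k poly3 set"
  have groups: "\<And>G. G \<in> witness_groups d \<Longrightarrow> G \<subseteq> deg_mons (d + 1)"
    using assms by (intro witness_groups_deg_mons) auto
  show "homogeneous_ideal3 ?I"
    unfolding witness_ideal_def using groups by (rule homogeneous_ideal3_ann_ideal)
  show "artinian3 ?I"
    unfolding witness_ideal_def using groups by (rule artinian3_ann_ideal)
  show "level3 ?I"
    unfolding witness_ideal_def using groups by (rule level3_ann_ideal)
  show "hilb3 ?I 1 = 3"
    using assms by (intro hilb3_witness_ideal_degree_one) simp
  show "hilb3 ?I d = 2 * d + 4"
    using assms by (intro hilb3_witness_ideal_degree_d) simp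
  show "hilb3 ?I (d + 1) = 2 * d + 4"
    using assms by (intro hilb3_witness_ideal_degree_d_plus_1) simp
  show "hilb3 ?I (d - 1) > hilb3 ?I d"
    using hilb3_witness_ideal_degree_d_minus_1[OF assms, where 'k='k] \<open>hilb3 ?I d = 2 * d + 4\<close> by simp
qed

end
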